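(* If every map in $(\mathbb{X}, \dagger)$ admits a \textbf{[MP.1,3]}-inverse, then for every object $X \in \mathbb{X}$, $\mathfrak{G}\left[ (\mathbb{X}, \dagger) \right]_X$ is a Markov category with conditionals.
   Context: Let $(\mathbb{X}, \dagger)$ be a dagger additive category (a dagger category enriched in abelian groups with additive dagger and finite biproducts satisfying $\pi_j^\dagger = \iota_j$). A [MP.1,3]-inverse of $f: A \to B$ is a map $f^\bullet: B \to A$ with $f \circ f^\bullet \circ f = f$ and $(f \circ f^\bullet)^\dagger = f \circ f^\bullet$. A map $p$ is $\dagger$-positive if $p = \phi^\dagger \circ \phi$ for some $\phi$. For an object $X$, the Gauss construction $\mathfrak{G}\left[ (\mathbb{X}, \dagger) \right]_X$ is the Markov category with the objects of $\mathbb{X}$, maps $A \to B$ the triples $(f,p,x)$ with $f: A \to B$, $p: B \to B$ $\dagger$-positive, $x: X \to B$; identities $\mathsf{Id}_A = (\mathsf{id}_A,0,0)$; composition $(g,q,y) \circ (f,p,x) = (g \circ f, q + g \circ p \circ g^\dagger, y + g \circ x)$; $A \otimes B = A \oplus B$, $(f,p,x) \otimes (g,q,y) = \left(f \oplus g, p \oplus q, \begin{bmatrix} x \\ y \end{bmatrix}\right)$; copy $\left(\begin{bmatrix} \mathsf{id}_A \\ \mathsf{id}_A \end{bmatrix}, 0, 0\right)$, delete $(0,0,0): A \to \mathsf{0}$. A Markov category has conditionals if every map $F: A \to B \otimes C$ has a map $G: B \otimes A \to C$ with $(\mathsf{Id}_B \otimes G) \circ (\mathsf{copy}_B \otimes \mathsf{Id}_A)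 \circ (\mathsf{Id}_B \otimes \mathsf{del}_C \otimes \mathsf{Id}_A) \circ (F \otimes \mathsf{Id}_A) \circ \mathsf{copy}_A = F$. *)

theory Defs
  imports Main
begin

section \<open>Dagger additive categories (morphisms untyped, hom-sets as predicates)\<close>

record ('o,'m) dac =
  dHom  :: "'o \<Rightarrow> 'o \<Rightarrow> 'm set"
  dCmp  :: "'m \<Rightarrow> 'm \<Rightarrow> 'm"   (* dCmp D g f = g o f *)
  dId   :: "'o \<Rightarrow> 'm"
  dDag  :: "'m \<Rightarrow> 'm"
  dAdd  :: "'m \<Rightarrow> 'm \<Rightarrow> 'm"
  dNeg  :: "'m \<Rightarrow> 'm"
  dZero :: "'o \<Rightarrow> 'o \<Rightarrow> 'm"
  dBip  :: "'o \<Rightarrow> 'o \<Rightarrow> 'o"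
  dP1   :: "'o \<Rightarrow> 'o \<Rightarrow> 'm"
  dP2   :: "'o \<Rightarrow> 'o \<Rightarrow> 'm"
  dI1   :: "'o \<Rightarrow> 'o \<Rightarrow> 'm"
  dI2   :: "'o \<Rightarrow> 'o \<Rightarrow> 'm"
  dZob  :: 'o

locale dagger_additive_category =
  fixes D :: "('o,'m) dac"
  assumes comp_hom: "f \<in> dHom D A B \<Longrightarrow> g \<in> dHom D B C \<Longrightarrow> dCmp D g f \<in> dHom D A C"
    and id_hom: "dId D A \<in> dHom D A A"
    and comp_id_left: "f \<in> dHom D A B \<Longrightarrow> dCmp D (dId D B) f = f"
    and comp_id_right: "f \<in> dHom D A B \<Longrightarrow> dCmp D f (dId D A) = f"
    and comp_assoc: "f \<in> dHom D A B \<Longrightarrow> g \<in> dHom D B C \<Longrightarrow> h \<in> dHom D C E \<Longrightarrow>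
                      dCmp D h (dCmp D g f) = dCmp D (dCmp D h g) f"
    and zero_hom: "dZero D A B \<in> dHom D A B"
    and add_hom: "f \<in> dHom D A B \<Longrightarrow> g \<in> dHom D A B \<Longrightarrow> dAdd D f g \<in> dHom D A B"
    and neg_hom: "f \<in> dHom D A B \<Longrightarrow> dNeg D f \<in> dHom D A B"
    and add_assoc: "f \<in> dHom D A B \<Longrightarrow> g \<in> dHom D A B \<Longrightarrow> h \<in> dHom D A B \<Longrightarrow>
                     dAdd D (dAdd D f g) h = dAdd D f (dAdd D g h)"
    and add_comm: "f \<in> dHom D A B \<Longrightarrow> g \<in> dHom D A B \<Longrightarrow> dAdd D f g = dAdd D g f"
    and add_zero: "f \<in> dHom D A B \<Longrightarrow> dAdd D f (dZero D A B) = f"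
    and add_neg: "f \<in> dHom D A B \<Longrightarrow> dAdd D f (dNeg D f) = dZero D A B"
    and comp_add_left: "f \<in> dHom D A B \<Longrightarrow> g \<in> dHom D A B \<Longrightarrow> h \<in> dHom D B C \<Longrightarrow>
                         dCmp D h (dAdd D f g) = dAdd D (dCmp D h f) (dCmp D h g)"
    and comp_add_right: "f \<in> dHom D A B \<Longrightarrow> g \<in> dHom D B C \<Longrightarrow> h \<in> dHom D B C \<Longrightarrow>
                         dCmp D (dAdd D g h) f = dAdd D (dCmp D g f) (dCmp D h f)"
    and dag_hom: "f \<in> dHom D A B \<Longrightarrow> dDag D f \<in> dHom D B A"
    and dag_dag: "f \<in> dHom D A B \<Longrightarrow> dDag D (dDag D f) = f"
    and dag_comp: "f \<in> dHom D A B \<Longrightarrow> g \<in> dHom D B C \<Longrightarrow>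
                    dDag D (dCmp D g f) = dCmp D (dDag D f) (dDag D g)"
    and dag_id: "dDag D (dId D A) = dId D A"
    and dag_add: "f \<in> dHom D A B \<Longrightarrow> g \<in> dHom D A B \<Longrightarrow>
                    dDag D (dAdd D f g) = dAdd D (dDag D f) (dDag D g)"
    and zero_obj_to: "dHom D A (dZob D) = {dZero D A (dZob D)}"
    and zero_obj_from: "dHom D (dZob D) A = {dZero D (dZob D) A}"
    and p1_hom: "dP1 D A B \<in> dHom D (dBip D A B) A"
    and p2_hom: "dP2 D A B \<in> dHom D (dBip D A B) B"
    and i1_hom: "dI1 D A B \<in> dHom D A (dBip D A B)"
    and i2_hom: "dI2 D A B \<in> dHom D B (dBip D A B)"
    and p1_i1: "dCmp D (dP1 D A B) (dI1 D A B) = dId D A"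
    and p2_i2: "dCmp D (dP2 D A B) (dI2 D A B) = dId D B"
    and p1_i2: "dCmp D (dP1 D A B) (dI2 D A B) = dZero D B A"
    and p2_i1: "dCmp D (dP2 D A B) (dI1 D A B) = dZero D A B"
    and bip_sum: "dAdd D (dCmp D (dI1 D A B) (dP1 D A B)) (dCmp D (dI2 D A B) (dP2 D A B))
                    = dId D (dBip D A B)"
    and dag_p1: "dDag D (dP1 D A B) = dI1 D A B"
    and dag_p2: "dDag D (dP2 D A B) = dI2 D A B"

definition mp13_inverse :: "('o,'m) dac \<Rightarrow> 'o \<Rightarrow> 'o \<Rightarrow> 'm \<Rightarrow> 'm \<Rightarrow> bool" where
  "mp13_inverse D A B f g \<longleftrightarrow>
     g \<in> dHom D B A \<and> dCmp D f (dCmp D g f) = f \<and> dDag D (dCmp D f g) = dCmp D f g"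

definition dag_positive :: "('o,'m) dac \<Rightarrow> 'o \<Rightarrow> 'm \<Rightarrow> bool" where
  "dag_positive D B p \<longleftrightarrow>
     p \<in> dHom D B B \<and> (\<exists>C \<phi>. \<phi> \<in> dHom D B C \<and> p = dCmp D (dDag D \<phi>) \<phi>)"

definition dsum :: "('o,'m) dac \<Rightarrow> 'o \<Rightarrow> 'o \<Rightarrow> 'o \<Rightarrow> 'o \<Rightarrow> 'm \<Rightarrow> 'm \<Rightarrow> 'm" where
  "dsum D A C B E f g =
     dAdd D (dCmp D (dI1 D B E) (dCmp D f (dP1 D A C)))
            (dCmp D (dI2 D B E) (dCmp D g (dP2 D A C)))"

definition dpair :: "('o,'m) dac \<Rightarrow> 'o \<Rightarrow> 'o \<Rightarrow> 'm \<Rightarrow> 'm \<Rightarrow> 'm" where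
  "dpair D B E x y = dAdd D (dCmp D (dI1 D B E) x) (dCmp D (dI2 D B E) y)"

section \<open>Markov categories (morphisms carry domain and codomain)\<close>

record ('o,'n) mcat =
  mHom   :: "'o \<Rightarrow> 'o \<Rightarrow> 'n set"
  mCmp   :: "'n \<Rightarrow> 'n \<Rightarrow> 'n"          (* mCmp M g f = g o f *)
  mId    :: "'o \<Rightarrow> 'n"
  mTen   :: "'o \<Rightarrow> 'o \<Rightarrow> 'o"
  mTenM  :: "'n \<Rightarrow> 'n \<Rightarrow> 'n"
  mUnit  :: 'o
  mAssoc :: "'o \<Rightarrow> 'o \<Rightarrow> 'o \<Rightarrow> 'n"
  mLu    :: "'o \<Rightarrow> 'n"
  mRu    :: "'o \<Rightarrow> 'n"
  mSym   :: "'o \<Rightarrow> 'o \<Rightarrow> 'n"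
  mCopy  :: "'o \<Rightarrow> 'n"
  mDel   :: "'o \<Rightarrow> 'n"

definition m_is_iso :: "('o,'n) mcat \<Rightarrow> 'o \<Rightarrow> 'o \<Rightarrow> 'n \<Rightarrow> bool" where
  "m_is_iso M A B f \<longleftrightarrow> f \<in> mHom M A B \<and>
     (\<exists>g \<in> mHom M B A. mCmp M g f = mId M A \<and> mCmp M f g = mId M B)"

definition m_inv :: "('o,'n) mcat \<Rightarrow> 'o \<Rightarrow> 'o \<Rightarrow> 'n \<Rightarrow> 'n" where
  "m_inv M A B f = (SOME g. g \<in> mHom M B A \<and> mCmp M g f = mId M A \<and> mCmp M f g = mId M B)"

text \<open>middle-four interchange (A*A)*(B*B) -> (A*B)*(A*B)\<close>
definition m_mid :: "('o,'n) mcat \<Rightarrow> 'o \<Rightarrow> 'o \<Rightarrow> 'n" where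
  "m_mid M A B =
    mCmp M (m_inv M (mTen M (mTen M A B) (mTen M A B)) (mTen M A (mTen M B (mTen M A B)))
                   (mAssoc M A B (mTen M A B)))
    (mCmp M (mTenM M (mId M A) (mAssoc M B A B))
    (mCmp M (mTenM M (mId M A) (mTenM M (mSym M A B) (mId M B)))
    (mCmp M (mTenM M (mId M A) (m_inv M (mTen M (mTen M A B) B) (mTen M A (mTen M B B))
                                      (mAssoc M A B B)))
            (mAssoc M A A (mTen M B B)))))"

locale markov_category =
  fixes M :: "('o,'n) mcat"
  assumes comp_hom: "f \<in> mHom M A B \<Longrightarrow> g \<in> mHom M B C \<Longrightarrow> mCmp M g f \<in> mHom M A C"
    and id_hom: "mId M A \<in> mHom M A A"
    and comp_id_left: "f \<in> mHom M A B \<Longrightarrow> mCmp M (mId M B) f = f"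
    and comp_id_right: "f \<in> mHom M A B \<Longrightarrow> mCmp M f (mId M A) = f"
    and comp_assoc: "f \<in> mHom M A B \<Longrightarrow> g \<in> mHom M B C \<Longrightarrow> h \<in> mHom M C E \<Longrightarrow>
                      mCmp M h (mCmp M g f) = mCmp M (mCmp M h g) f"
    and tens_hom: "f \<in> mHom M A B \<Longrightarrow> g \<in> mHom M C E \<Longrightarrow>
                    mTenM M f g \<in> mHom M (mTen M A C) (mTen M B E)"
    and tens_id: "mTenM M (mId M A) (mId M B) = mId M (mTen M A B)"
    and tens_comp: "f \<in> mHom M A B \<Longrightarrow> f' \<in> mHom M B C \<Longrightarrow> g \<in> mHom M A' B' \<Longrightarrow> g' \<in> mHom M B' C' \<Longrightarrow>
                     mTenM M (mCmp M f' f) (mCmp M g' g) = mCmp M (mTenM M f' g') (mTenM M f g)"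
    and assoc_iso: "m_is_iso M (mTen M (mTen M A B) C) (mTen M A (mTen M B C)) (mAssoc M A B C)"
    and assoc_nat: "f \<in> mHom M A A' \<Longrightarrow> g \<in> mHom M B B' \<Longrightarrow> h \<in> mHom M C C' \<Longrightarrow>
                     mCmp M (mAssoc M A' B' C') (mTenM M (mTenM M f g) h)
                       = mCmp M (mTenM M f (mTenM M g h)) (mAssoc M A B C)"
    and lu_iso: "m_is_iso M (mTen M (mUnit M) A) A (mLu M A)"
    and lu_nat: "f \<in> mHom M A B \<Longrightarrow> mCmp M f (mLu M A) = mCmp M (mLu M B) (mTenM M (mId M (mUnit M)) f)"
    and ru_iso: "m_is_iso M (mTen M A (mUnit M)) A (mRu M A)"
    and ru_nat: "f \<in> mHom M A B \<Longrightarrow> mCmp M f (mRu M A) = mCmp M (mRu M B) (mTenM M f (mId M (mUnit M)))"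
    and pentagon: "mCmp M (mAssoc M A B (mTen M C E)) (mAssoc M (mTen M A B) C E)
         = mCmp M (mTenM M (mId M A) (mAssoc M B C E))
             (mCmp M (mAssoc M A (mTen M B C) E) (mTenM M (mAssoc M A B C) (mId M E)))"
    and triangle: "mCmp M (mTenM M (mId M A) (mLu M B)) (mAssoc M A (mUnit M) B)
                     = mTenM M (mRu M A) (mId M B)"
    and sym_hom: "mSym M A B \<in> mHom M (mTen M A B) (mTen M B A)"
    and sym_nat: "f \<in> mHom M A A' \<Longrightarrow> g \<in> mHom M B B' \<Longrightarrow>
                    mCmp M (mSym M A' B') (mTenM M f g) = mCmp M (mTenM M g f) (mSym M A B)"
    and sym_sym: "mCmp M (mSym M B A) (mSym M A B) = mId M (mTen M A B)"
    and hexagon: "mCmp M (mAssoc M B C A) (mCmp M (mSym M A (mTen M B C)) (mAssoc M A B C))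
         = mCmp M (mTenM M (mId M B) (mSym M A C))
             (mCmp M (mAssoc M B A C) (mTenM M (mSym M A B) (mId M C)))"
    and copy_hom: "mCopy M A \<in> mHom M A (mTen M A A)"
    and del_hom: "mDel M A \<in> mHom M A (mUnit M)"
    and counit_left: "mCmp M (mLu M A) (mCmp M (mTenM M (mDel M A) (mId M A)) (mCopy M A)) = mId M A"
    and counit_right: "mCmp M (mRu M A) (mCmp M (mTenM M (mId M A) (mDel M A)) (mCopy M A)) = mId M A"
    and coassoc: "mCmp M (mAssoc M A A A) (mCmp M (mTenM M (mCopy M A) (mId M A)) (mCopy M A))
                    = mCmp M (mTenM M (mId M A) (mCopy M A)) (mCopy M A)"
    and cocomm: "mCmp M (mSym M A A) (mCopy M A) = mCopy M A"
    and copy_tensor: "mCopy M (mTen M A B) = mCmp M (m_mid M A B) (mTenM M (mCopy M A) (mCopy M B))"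
    and del_tensor: "mDel M (mTen M A B) = mCmp M (mLu M (mUnit M)) (mTenM M (mDel M A) (mDel M B))"
    and copy_unit: "mCopy M (mUnit M) = m_inv M (mTen M (mUnit M) (mUnit M)) (mUnit M) (mLu M (mUnit M))"
    and del_unit: "mDel M (mUnit M) = mId M (mUnit M)"
    and del_nat: "f \<in> mHom M A B \<Longrightarrow> mCmp M (mDel M B) f = mDel M A"

definition has_conditionals :: "('o,'n) mcat \<Rightarrow> bool" where
  "has_conditionals M \<longleftrightarrow>
    (\<forall>A B C F. F \<in> mHom M A (mTen M B C) \<longrightarrow>
      (\<exists>G \<in> mHom M (mTen M B A) C.
         mCmp M (mTenM M (mId M B) G)
          (mCmp M (mAssoc M B B A)
          (mCmp M (mTenM M (mCopy M B) (mId M A))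
          (mCmp M (mTenM M (mCmp M (mRu M B) (mTenM M (mId M B) (mDel M C))) (mId M A))
          (mCmp M (mTenM M F (mId M A)) (mCopy M A))))) = F))"

section \<open>The Gauss construction\<close>

type_synonym ('o,'m) gmor = "'o \<times> 'o \<times> 'm \<times> 'm \<times> 'm"  (* (dom, cod, f, p, x) *)

definition gauss :: "('o,'m) dac \<Rightarrow> 'o \<Rightarrow> ('o, ('o,'m) gmor) mcat" where
  "gauss D X =
   \<lparr> mHom = (\<lambda>A B. {(A', B', f, p, x). A' = A \<and> B' = B \<and> f \<in> dHom D A B
                        \<and> dag_positive D B p \<and> x \<in> dHom D X B}),
     mCmp = (\<lambda>(B', C, g, q, y) (A, B, f, p, x).
               (A, C, dCmp D g f, dAdd D q (dCmp D g (dCmp D p (dDag D g))), dAdd D y (dCmp D g x))),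
     mId = (\<lambda>A. (A, A, dId D A, dZero D A A, dZero D X A)),
     mTen = dBip D,
     mTenM = (\<lambda>(A, B, f, p, x) (C, E, g, q, y).
               (dBip D A C, dBip D B E, dsum D A C B E f g, dsum D B E B E p q, dpair D B E x y)),
     mUnit = dZob D,
     mAssoc = (\<lambda>A B C. (dBip D (dBip D A B) C, dBip D A (dBip D B C),
        dAdd D (dCmp D (dI1 D A (dBip D B C)) (dCmp D (dP1 D A B) (dP1 D (dBip D A B) C)))
               (dCmp D (dI2 D A (dBip D B C))
                  (dAdd D (dCmp D (dI1 D B C) (dCmp D (dP2 D A B) (dP1 D (dBip D A B) C)))
                          (dCmp D (dI2 D B C) (dP2 D (dBip D A B) C)))),
        dZero D (dBip D A (dBip D B C)) (dBip D A (dBip D B C)),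
        dZero D X (dBip D A (dBip D B C)))),
     mLu = (\<lambda>A. (dBip D (dZob D) A, A, dP2 D (dZob D) A, dZero D A A, dZero D X A)),
     mRu = (\<lambda>A. (dBip D A (dZob D), A, dP1 D A (dZob D), dZero D A A, dZero D X A)),
     mSym = (\<lambda>A B. (dBip D A B, dBip D B A,
        dAdd D (dCmp D (dI2 D B A) (dP1 D A B)) (dCmp D (dI1 D B A) (dP2 D A B)),
        dZero D (dBip D B A) (dBip D B A), dZero D X (dBip D B A))),
     mCopy = (\<lambda>A. (A, dBip D A A, dpair D A A (dId D A) (dId D A),
        dZero D (dBip D A A) (dBip D A A), dZero D X (dBip D A A))),
     mDel = (\<lambda>A. (A, dZob D, dZero D A (dZob D), dZero D (dZob D) (dZob D), dZero D X (dZob D))) \<rparr>"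

end

theory Submission
  imports Defs
begin

(*
  Composition and tensor act on a triple (f, p, x) like on a linear map f with Gaussian noise
  of covariance p and mean x, and conditionals come from the Gaussian conditioning formula.
  Write the covariance of F = (f, p, x) : A \<rightarrow> B \<oplus> C as p = \<phi>\<dagger>\<phi> with \<phi> : B \<oplus> C \<rightarrow> Y,
  put \<phi>\<^sub>i = \<phi>\<iota>\<^sub>i, so that the blocks of p are p\<^sub>i\<^sub>j = \<pi>\<^sub>i p \<iota>\<^sub>j = \<phi>\<^sub>i\<dagger>\<phi>\<^sub>j, and let h be an
  [MP.1,3]-inverse of \<phi>\<^sub>1. Since \<phi>\<^sub>1h is self-adjoint and \<phi>\<^sub>1h\<phi>\<^sub>1 = \<phi>\<^sub>1, the regression
  coefficient g = \<phi>\<^sub>2\<dagger>h\<dagger> : B \<rightarrow> C satisfies g p\<^sub>1\<^sub>1 = p\<^sub>2\<^sub>1 and p\<^sub>1\<^sub>1g\<dagger> = p\<^sub>1\<^sub>2, and the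
  Schur complement p\<^sub>2\<^sub>2 - g p\<^sub>1\<^sub>2 equals \<psi>\<dagger>\<psi> for \<psi> = \<phi>\<^sub>2 - \<phi>\<^sub>1h\<phi>\<^sub>2, so it is positive.
  The conditional is ([g, \<pi>\<^sub>2f - g\<pi>\<^sub>1f], \<psi>\<dagger>\<psi>, \<pi>\<^sub>2x - g\<pi>\<^sub>1x) : B \<oplus> A \<rightarrow> C.
  The Markov category axioms are equations between triples of maps into or out of
  biproducts, which hold componentwise by the biproduct equations.
*)

context dagger_additive_category
begin

section \<open>Calculus of typed morphisms\<close>

abbreviation Hom :: "'o \<Rightarrow> 'o \<Rightarrow> 'm set" where "Hom \<equiv> dHom D"
abbreviation bip :: "'o \<Rightarrow> 'o \<Rightarrow> 'o" (infixr "\<oplus>" 65) where "bip \<equiv> dBip D"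
abbreviation \<pi>\<^sub>1 :: "'o \<Rightarrow> 'o \<Rightarrow> 'm" where "\<pi>\<^sub>1 \<equiv> dP1 D"
abbreviation \<pi>\<^sub>2 :: "'o \<Rightarrow> 'o \<Rightarrow> 'm" where "\<pi>\<^sub>2 \<equiv> dP2 D"
abbreviation \<iota>\<^sub>1 :: "'o \<Rightarrow> 'o \<Rightarrow> 'm" where "\<iota>\<^sub>1 \<equiv> dI1 D"
abbreviation \<iota>\<^sub>2 :: "'o \<Rightarrow> 'o \<Rightarrow> 'm" where "\<iota>\<^sub>2 \<equiv> dI2 D"

text \<open>
  The object arguments of the following operations are redundant. They make the typing
  premises of the axioms determined by the left-hand sides, so that the simplifier can
  use the axioms as conditional rewrite rules.
\<close>

definition tcomp :: "'o \<Rightarrow> 'o \<Rightarrow> 'o \<Rightarrow> 'm \<Rightarrow> 'm \<Rightarrow> 'm" where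
  "tcomp A B C g f = dCmp D g f"

definition tadd :: "'o \<Rightarrow> 'o \<Rightarrow> 'm \<Rightarrow> 'm \<Rightarrow> 'm" where
  "tadd A B f g = dAdd D f g"

definition tneg :: "'o \<Rightarrow> 'o \<Rightarrow> 'm \<Rightarrow> 'm" where
  "tneg A B f = dNeg D f"

definition tdag :: "'o \<Rightarrow> 'o \<Rightarrow> 'm \<Rightarrow> 'm" where
  "tdag A B f = dDag D f"

lemma tcomp_in_Hom [simp]: "f \<in> Hom A B \<Longrightarrow> g \<in> Hom B C \<Longrightarrow> tcomp A B C g f \<in> Hom A C"
  by (simp add: tcomp_def comp_hom)

lemma tadd_in_Hom [simp]: "f \<in> Hom A B \<Longrightarrow> g \<in> Hom A B \<Longrightarrow> tadd A B f g \<in> Hom A B"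
  by (simp add: tadd_def add_hom)

lemma tneg_in_Hom [simp]: "f \<in> Hom A B \<Longrightarrow> tneg A B f \<in> Hom A B"
  by (simp add: tneg_def neg_hom)

lemma tdag_in_Hom [simp]: "f \<in> Hom A B \<Longrightarrow> tdag A B f \<in> Hom B A"
  by (simp add: tdag_def dag_hom)

lemmas structure_maps_in_Hom [simp] = id_hom zero_hom p1_hom p2_hom i1_hom i2_hom

lemma tcomp_assoc [simp]:
  "f \<in> Hom A B \<Longrightarrow> g \<in> Hom B C \<Longrightarrow> h \<in> Hom C E \<Longrightarrow>
    tcomp A B E (tcomp B C E h g) f = tcomp A C E h (tcomp A B C g f)"
  by (simp add: tcomp_def comp_assoc)

lemma tcomp_id_left [simp]: "f \<in> Hom A B \<Longrightarrow> tcomp A B B (dId D B) f = f"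
  by (simp add: tcomp_def comp_id_left)

lemma tcomp_id_right [simp]: "f \<in> Hom A B \<Longrightarrow> tcomp A A B f (dId D A) = f"
  by (simp add: tcomp_def comp_id_right)

lemma tadd_zero_right [simp]: "f \<in> Hom A B \<Longrightarrow> tadd A B f (dZero D A B) = f"
  by (simp add: tadd_def add_zero)

lemma tadd_commute: "f \<in> Hom A B \<Longrightarrow> g \<in> Hom A B \<Longrightarrow> tadd A B f g = tadd A B g f"
  by (simp add: tadd_def add_comm)

lemma tadd_zero_left [simp]: "f \<in> Hom A B \<Longrightarrow> tadd A B (dZero D A B) f = f"
  by (metis tadd_commute tadd_zero_right zero_hom)

lemma tadd_assoc:
  "f \<in> Hom A B \<Longrightarrow> g \<in> Hom A B \<Longrightarrow> h \<in> Hom A B \<Longrightarrow>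
    tadd A B (tadd A B f g) h = tadd A B f (tadd A B g h)"
  by (simp add: tadd_def add_assoc)

lemma tadd_left_commute:
  "f \<in> Hom A B \<Longrightarrow> g \<in> Hom A B \<Longrightarrow> h \<in> Hom A B \<Longrightarrow>
    tadd A B f (tadd A B g h) = tadd A B g (tadd A B f h)"
  by (metis tadd_assoc tadd_commute)

lemmas tadd_ac = tadd_assoc tadd_commute tadd_left_commute

lemma tcomp_tadd_left [simp]:
  "f \<in> Hom A B \<Longrightarrow> g \<in> Hom A B \<Longrightarrow> h \<in> Hom B C \<Longrightarrow>
    tcomp A B C h (tadd A B f g) = tadd A C (tcomp A B C h f) (tcomp A B C h g)"
  by (simp add: tcomp_def tadd_def comp_add_left)

lemma tcomp_tadd_right [simp]:
  "f \<in> Hom A B \<Longrightarrow> g \<in> Hom B C \<Longrightarrow> h \<in> Hom B C \<Longrightarrow>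
    tcomp A B C (tadd B C g h) f = tadd A C (tcomp A B C g f) (tcomp A B C h f)"
  by (simp add: tcomp_def tadd_def comp_add_right)

lemma tadd_tneg_right [simp]: "f \<in> Hom A B \<Longrightarrow> tadd A B f (tneg A B f) = dZero D A B"
  by (simp add: tadd_def tneg_def add_neg)

lemma tadd_tneg_left [simp]: "f \<in> Hom A B \<Longrightarrow> tadd A B (tneg A B f) f = dZero D A B"
  by (metis tadd_commute tadd_tneg_right tneg_in_Hom)

lemma tadd_tneg_cancel_left [simp]:
  "f \<in> Hom A B \<Longrightarrow> g \<in> Hom A B \<Longrightarrow> tadd A B f (tadd A B (tneg A B f) g) = g"
  by (metis tadd_assoc tadd_tneg_right tadd_zero_left tneg_in_Hom)

lemma tneg_tadd_cancel_left [simp]: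
  "f \<in> Hom A B \<Longrightarrow> g \<in> Hom A B \<Longrightarrow> tadd A B (tneg A B f) (tadd A B f g) = g"
  by (metis tadd_assoc tadd_tneg_left tadd_zero_left tneg_in_Hom)

lemma tneg_unique:
  assumes "f \<in> Hom A B" "g \<in> Hom A B" "tadd A B f g = dZero D A B"
  shows "g = tneg A B f"
  by (metis assms tneg_tadd_cancel_left tadd_zero_right tneg_in_Hom)

lemma idempotent_tadd_eq_zero:
  assumes "u \<in> Hom A B" "u = tadd A B u u"
  shows "u = dZero D A B"
  by (metis assms tneg_tadd_cancel_left tadd_tneg_left)

lemma tcomp_zero_right [simp]: "g \<in> Hom B C \<Longrightarrow> tcomp A B C g (dZero D A B) = dZero D A C"
  by (rule idempotent_tadd_eq_zero) (simp, metis tcomp_tadd_left tadd_zero_right zero_hom)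

lemma tcomp_zero_left [simp]: "f \<in> Hom A B \<Longrightarrow> tcomp A B C (dZero D B C) f = dZero D A C"
  by (rule idempotent_tadd_eq_zero) (simp, metis tcomp_tadd_right tadd_zero_right zero_hom)

lemma tneg_zero [simp]: "tneg A B (dZero D A B) = dZero D A B"
  by (metis tneg_unique tadd_zero_right zero_hom)

lemma tneg_tneg [simp]: "f \<in> Hom A B \<Longrightarrow> tneg A B (tneg A B f) = f"
  by (metis tneg_unique tadd_tneg_left tneg_in_Hom)

lemma tcomp_tneg_left [simp]:
  "f \<in> Hom A B \<Longrightarrow> g \<in> Hom B C \<Longrightarrow> tcomp A B C (tneg B C g) f = tneg A C (tcomp A B C g f)"
  by (rule tneg_unique) (simp_all flip: tcomp_tadd_right)

lemma tcomp_tneg_right [simp]: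
  "f \<in> Hom A B \<Longrightarrow> g \<in> Hom B C \<Longrightarrow> tcomp A B C g (tneg A B f) = tneg A C (tcomp A B C g f)"
  by (rule tneg_unique) (simp_all flip: tcomp_tadd_left)

lemma tneg_tadd [simp]:
  assumes "f \<in> Hom A B" "g \<in> Hom A B"
  shows "tneg A B (tadd A B f g) = tadd A B (tneg A B f) (tneg A B g)"
proof (rule tneg_unique[symmetric])
  show "tadd A B (tadd A B f g) (tadd A B (tneg A B f) (tneg A B g)) = dZero D A B"
    using assms by (simp add: tadd_assoc tadd_left_commute[of g])
qed (use assms in simp_all)

lemma tdag_tdag [simp]: "f \<in> Hom A B \<Longrightarrow> tdag B A (tdag A B f) = f"
  by (simp add: tdag_def dag_dag)

lemma tdag_tcomp [simp]:
  "f \<in> Hom A B \<Longrightarrow> g \<in> Hom B C \<Longrightarrow> tdag A C (tcomp A B C g f) = tcomp C B A (tdag A B f) (tdag B C g)"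
  by (simp add: tdag_def tcomp_def dag_comp)

lemma tdag_tadd [simp]:
  "f \<in> Hom A B \<Longrightarrow> g \<in> Hom A B \<Longrightarrow> tdag A B (tadd A B f g) = tadd B A (tdag A B f) (tdag A B g)"
  by (simp add: tdag_def tadd_def dag_add)

lemma tdag_id [simp]: "tdag A A (dId D A) = dId D A"
  by (simp add: tdag_def dag_id)

lemma tdag_zero [simp]: "tdag A B (dZero D A B) = dZero D B A"
  by (rule idempotent_tadd_eq_zero) (simp, metis tdag_tadd tadd_zero_right zero_hom)

lemma tdag_tneg [simp]: "f \<in> Hom A B \<Longrightarrow> tdag A B (tneg A B f) = tneg B A (tdag A B f)"
  by (rule tneg_unique) (simp_all flip: tdag_tadd)

lemma tdag_p1 [simp]: "tdag (A \<oplus> B) A (\<pi>\<^sub>1 A B) = \<iota>\<^sub>1 A B"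
  by (simp add: tdag_def dag_p1)

lemma tdag_p2 [simp]: "tdag (A \<oplus> B) B (\<pi>\<^sub>2 A B) = \<iota>\<^sub>2 A B"
  by (simp add: tdag_def dag_p2)

lemma tdag_i1 [simp]: "tdag A (A \<oplus> B) (\<iota>\<^sub>1 A B) = \<pi>\<^sub>1 A B"
  by (metis tdag_def dag_p1 dag_dag p1_hom)

lemma tdag_i2 [simp]: "tdag B (A \<oplus> B) (\<iota>\<^sub>2 A B) = \<pi>\<^sub>2 A B"
  by (metis tdag_def dag_p2 dag_dag p2_hom)

section \<open>Biproducts\<close>

lemma tcomp_p1_i1 [simp]: "tcomp A (A \<oplus> B) A (\<pi>\<^sub>1 A B) (\<iota>\<^sub>1 A B) = dId D A"
  by (simp add: tcomp_def p1_i1)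

lemma tcomp_p2_i2 [simp]: "tcomp B (A \<oplus> B) B (\<pi>\<^sub>2 A B) (\<iota>\<^sub>2 A B) = dId D B"
  by (simp add: tcomp_def p2_i2)

lemma tcomp_p1_i2 [simp]: "tcomp B (A \<oplus> B) A (\<pi>\<^sub>1 A B) (\<iota>\<^sub>2 A B) = dZero D B A"
  by (simp add: tcomp_def p1_i2)

lemma tcomp_p2_i1 [simp]: "tcomp A (A \<oplus> B) B (\<pi>\<^sub>2 A B) (\<iota>\<^sub>1 A B) = dZero D A B"
  by (simp add: tcomp_def p2_i1)

lemma tcomp_p1_i1_cancel [simp]:
  "f \<in> Hom Z A \<Longrightarrow> tcomp Z (A \<oplus> B) A (\<pi>\<^sub>1 A B) (tcomp Z A (A \<oplus> B) (\<iota>\<^sub>1 A B) f) = f"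
  by (metis tcomp_p1_i1 tcomp_assoc tcomp_id_left structure_maps_in_Hom)

lemma tcomp_p2_i2_cancel [simp]:
  "f \<in> Hom Z B \<Longrightarrow> tcomp Z (A \<oplus> B) B (\<pi>\<^sub>2 A B) (tcomp Z B (A \<oplus> B) (\<iota>\<^sub>2 A B) f) = f"
  by (metis tcomp_p2_i2 tcomp_assoc tcomp_id_left structure_maps_in_Hom)

lemma tcomp_p1_i2_cancel [simp]:
  "f \<in> Hom Z B \<Longrightarrow> tcomp Z (A \<oplus> B) A (\<pi>\<^sub>1 A B) (tcomp Z B (A \<oplus> B) (\<iota>\<^sub>2 A B) f) = dZero D Z A"
  by (metis tcomp_p1_i2 tcomp_assoc tcomp_zero_left structure_maps_in_Hom)

lemma tcomp_p2_i1_cancel [simp]: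
  "f \<in> Hom Z A \<Longrightarrow> tcomp Z (A \<oplus> B) B (\<pi>\<^sub>2 A B) (tcomp Z A (A \<oplus> B) (\<iota>\<^sub>1 A B) f) = dZero D Z B"
  by (metis tcomp_p2_i1 tcomp_assoc tcomp_zero_left structure_maps_in_Hom)

lemma tadd_biproduct_id:
  "tadd (A \<oplus> B) (A \<oplus> B) (tcomp (A \<oplus> B) A (A \<oplus> B) (\<iota>\<^sub>1 A B) (\<pi>\<^sub>1 A B))
     (tcomp (A \<oplus> B) B (A \<oplus> B) (\<iota>\<^sub>2 A B) (\<pi>\<^sub>2 A B)) = dId D (A \<oplus> B)"
  by (simp add: tadd_def tcomp_def bip_sum)

text \<open>
  Recording the type of an equation lets \<open>intro\<close> apply the extensionality rules below,
  which need to see that the domain or codomain is a biproduct.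
\<close>

definition hom_eq :: "'o \<Rightarrow> 'o \<Rightarrow> 'm \<Rightarrow> 'm \<Rightarrow> bool" where
  "hom_eq A B u v \<longleftrightarrow> u \<in> Hom A B \<and> v \<in> Hom A B \<and> u = v"

lemma hom_eqD: "hom_eq A B u v \<Longrightarrow> u = v"
  by (simp add: hom_eq_def)

lemma hom_eq_into_biproduct:
  assumes u: "u \<in> Hom Z (A \<oplus> B)" and v: "v \<in> Hom Z (A \<oplus> B)"
    and "hom_eq Z A (tcomp Z (A \<oplus> B) A (\<pi>\<^sub>1 A B) u) (tcomp Z (A \<oplus> B) A (\<pi>\<^sub>1 A B) v)"
    and "hom_eq Z B (tcomp Z (A \<oplus> B) B (\<pi>\<^sub>2 A B) u) (tcomp Z (A \<oplus> B) B (\<pi>\<^sub>2 A B) v)"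
  shows "hom_eq Z (A \<oplus> B) u v"
proof -
  have "w = tadd Z (A \<oplus> B) (tcomp Z A (A \<oplus> B) (\<iota>\<^sub>1 A B) (tcomp Z (A \<oplus> B) A (\<pi>\<^sub>1 A B) w))
      (tcomp Z B (A \<oplus> B) (\<iota>\<^sub>2 A B) (tcomp Z (A \<oplus> B) B (\<pi>\<^sub>2 A B) w))"
    if "w \<in> Hom Z (A \<oplus> B)" for w
    using that tcomp_id_left[OF that] by (simp flip: tadd_biproduct_id)
  then show ?thesis
    using assms by (metis hom_eq_def)
qed

lemma hom_eq_from_biproduct:
  assumes u: "u \<in> Hom (A \<oplus> B) Z" and v: "v \<in> Hom (A \<oplus> B) Z"
    and "hom_eq A Z (tcomp A (A \<oplus> B) Z u (\<iota>\<^sub>1 A B)) (tcomp A (A \<oplus> B) Z v (\<iota>\<^sub>1 A B))"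
    and "hom_eq B Z (tcomp B (A \<oplus> B) Z u (\<iota>\<^sub>2 A B)) (tcomp B (A \<oplus> B) Z v (\<iota>\<^sub>2 A B))"
  shows "hom_eq (A \<oplus> B) Z u v"
proof -
  have "w = tadd (A \<oplus> B) Z (tcomp (A \<oplus> B) A Z (tcomp A (A \<oplus> B) Z w (\<iota>\<^sub>1 A B)) (\<pi>\<^sub>1 A B))
      (tcomp (A \<oplus> B) B Z (tcomp B (A \<oplus> B) Z w (\<iota>\<^sub>2 A B)) (\<pi>\<^sub>2 A B))"
    if "w \<in> Hom (A \<oplus> B) Z" for w
    using that tcomp_id_right[OF that] by (simp flip: tadd_biproduct_id)
  then show ?thesis
    using assms by (metis hom_eq_def)
qed

lemma hom_eq_from_zero_object: "u \<in> Hom (dZob D) B \<Longrightarrow> v \<in> Hom (dZob D) B \<Longrightarrow> hom_eq (dZob D) B u v"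
  using zero_obj_from by (auto simp: hom_eq_def)

lemma hom_eq_into_zero_object: "u \<in> Hom A (dZob D) \<Longrightarrow> v \<in> Hom A (dZob D) \<Longrightarrow> hom_eq A (dZob D) u v"
  using zero_obj_to by (auto simp: hom_eq_def)

lemmas hom_eq_intros =
  hom_eq_from_zero_object hom_eq_into_zero_object hom_eq_into_biproduct hom_eq_from_biproduct

lemma dsum_eq [simp]:
  "dsum D A C B E f g = tadd (A \<oplus> C) (B \<oplus> E)
     (tcomp (A \<oplus> C) B (B \<oplus> E) (\<iota>\<^sub>1 B E) (tcomp (A \<oplus> C) A B f (\<pi>\<^sub>1 A C)))
     (tcomp (A \<oplus> C) E (B \<oplus> E) (\<iota>\<^sub>2 B E) (tcomp (A \<oplus> C) C E g (\<pi>\<^sub>2 A C)))"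
  by (simp add: dsum_def tadd_def tcomp_def)

lemma dsum_in_Hom [simp]: "f \<in> Hom A B \<Longrightarrow> g \<in> Hom C E \<Longrightarrow> dsum D A C B E f g \<in> Hom (A \<oplus> C) (B \<oplus> E)"
  by simp

lemma dpair_eq:
  "dpair D B E x y = tadd X (B \<oplus> E) (tcomp X B (B \<oplus> E) (\<iota>\<^sub>1 B E) x) (tcomp X E (B \<oplus> E) (\<iota>\<^sub>2 B E) y)"
  by (simp add: dpair_def tadd_def tcomp_def)

definition assoc_map :: "'o \<Rightarrow> 'o \<Rightarrow> 'o \<Rightarrow> 'm" where
  "assoc_map A B C = tadd ((A \<oplus> B) \<oplus> C) (A \<oplus> B \<oplus> C)
     (tcomp ((A \<oplus> B) \<oplus> C) A (A \<oplus> B \<oplus> C) (\<iota>\<^sub>1 A (B \<oplus> C))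
        (tcomp ((A \<oplus> B) \<oplus> C) (A \<oplus> B) A (\<pi>\<^sub>1 A B) (\<pi>\<^sub>1 (A \<oplus> B) C)))
     (tcomp ((A \<oplus> B) \<oplus> C) (B \<oplus> C) (A \<oplus> B \<oplus> C) (\<iota>\<^sub>2 A (B \<oplus> C))
        (tadd ((A \<oplus> B) \<oplus> C) (B \<oplus> C)
          (tcomp ((A \<oplus> B) \<oplus> C) B (B \<oplus> C) (\<iota>\<^sub>1 B C)
             (tcomp ((A \<oplus> B) \<oplus> C) (A \<oplus> B) B (\<pi>\<^sub>2 A B) (\<pi>\<^sub>1 (A \<oplus> B) C)))
          (tcomp ((A \<oplus> B) \<oplus> C) C (B \<oplus> C) (\<iota>\<^sub>2 B C) (\<pi>\<^sub>2 (A \<oplus> B) C))))"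

lemma assoc_map_in_Hom [simp]: "assoc_map A B C \<in> Hom ((A \<oplus> B) \<oplus> C) (A \<oplus> B \<oplus> C)"
  by (simp add: assoc_map_def)

definition assoc_inv_map :: "'o \<Rightarrow> 'o \<Rightarrow> 'o \<Rightarrow> 'm" where
  "assoc_inv_map A B C = tadd (A \<oplus> B \<oplus> C) ((A \<oplus> B) \<oplus> C)
     (tcomp (A \<oplus> B \<oplus> C) (A \<oplus> B) ((A \<oplus> B) \<oplus> C) (\<iota>\<^sub>1 (A \<oplus> B) C)
        (tadd (A \<oplus> B \<oplus> C) (A \<oplus> B)
          (tcomp (A \<oplus> B \<oplus> C) A (A \<oplus> B) (\<iota>\<^sub>1 A B) (\<pi>\<^sub>1 A (B \<oplus> C)))
          (tcomp (A \<oplus> B \<oplus> C) B (A \<oplus> B) (\<iota>\<^sub>2 A B)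
             (tcomp (A \<oplus> B \<oplus> C) (B \<oplus> C) B (\<pi>\<^sub>1 B C) (\<pi>\<^sub>2 A (B \<oplus> C))))))
     (tcomp (A \<oplus> B \<oplus> C) C ((A \<oplus> B) \<oplus> C) (\<iota>\<^sub>2 (A \<oplus> B) C)
        (tcomp (A \<oplus> B \<oplus> C) (B \<oplus> C) C (\<pi>\<^sub>2 B C) (\<pi>\<^sub>2 A (B \<oplus> C))))"

lemma assoc_inv_map_in_Hom [simp]: "assoc_inv_map A B C \<in> Hom (A \<oplus> B \<oplus> C) ((A \<oplus> B) \<oplus> C)"
  by (simp add: assoc_inv_map_def)

definition swap_map :: "'o \<Rightarrow> 'o \<Rightarrow> 'm" where
  "swap_map A B = tadd (A \<oplus> B) (B \<oplus> A) (tcomp (A \<oplus> B) A (B \<oplus> A) (\<iota>\<^sub>2 B A) (\<pi>\<^sub>1 A B))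
     (tcomp (A \<oplus> B) B (B \<oplus> A) (\<iota>\<^sub>1 B A) (\<pi>\<^sub>2 A B))"

lemma swap_map_in_Hom [simp]: "swap_map A B \<in> Hom (A \<oplus> B) (B \<oplus> A)"
  by (simp add: swap_map_def)

definition diag_map :: "'o \<Rightarrow> 'm" where
  "diag_map A = tadd A (A \<oplus> A) (\<iota>\<^sub>1 A A) (\<iota>\<^sub>2 A A)"

lemma diag_map_in_Hom [simp]: "diag_map A \<in> Hom A (A \<oplus> A)"
  by (simp add: diag_map_def)

section \<open>Positive maps\<close>

lemma dag_positive_iff:
  "dag_positive D B p \<longleftrightarrow> p \<in> Hom B B \<and> (\<exists>C \<phi>. \<phi> \<in> Hom B C \<and> p = tcomp B C B (tdag B C \<phi>) \<phi>)"
  by (simp add: dag_positive_def tcomp_def tdag_def)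

lemma dag_positive_in_Hom: "dag_positive D B p \<Longrightarrow> p \<in> Hom B B"
  by (simp add: dag_positive_iff)

lemma dag_positive_tcomp_tdag: "\<phi> \<in> Hom B C \<Longrightarrow> dag_positive D B (tcomp B C B (tdag B C \<phi>) \<phi>)"
  by (auto simp: dag_positive_iff)

lemma dag_positive_zero [simp]: "dag_positive D B (dZero D B B)"
  using dag_positive_tcomp_tdag[of "dZero D B B" B B] by simp

lemma dag_positive_tadd:
  assumes "dag_positive D B p" "dag_positive D B q"
  shows "dag_positive D B (tadd B B p q)"
proof -
  obtain C \<phi> C' \<psi> where \<phi>: "\<phi> \<in> Hom B C" "p = tcomp B C B (tdag B C \<phi>) \<phi>"
    and \<psi>: "\<psi> \<in> Hom B C'" "q = tcomp B C' B (tdag B C' \<psi>) \<psi>"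
    using assms unfolding dag_positive_iff by auto
  define \<chi> where "\<chi> = tadd B (C \<oplus> C') (tcomp B C (C \<oplus> C') (\<iota>\<^sub>1 C C') \<phi>) (tcomp B C' (C \<oplus> C') (\<iota>\<^sub>2 C C') \<psi>)"
  have "tadd B B p q = tcomp B (C \<oplus> C') B (tdag B (C \<oplus> C') \<chi>) \<chi>"
    using \<phi> \<psi> by (simp add: \<chi>_def)
  moreover have "\<chi> \<in> Hom B (C \<oplus> C')"
    using \<phi> \<psi> by (simp add: \<chi>_def)
  ultimately show ?thesis
    using dag_positive_tcomp_tdag by simp
qed

lemma dag_positive_conj:
  assumes "dag_positive D B p" "g \<in> Hom B C"
  shows "dag_positive D C (tcomp C B C g (tcomp C B B p (tdag B C g)))"
proof -
  obtain E \<phi> where \<phi>: "\<phi> \<in> Hom B E" "p = tcomp B E B (tdag B E \<phi>) \<phi>"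
    using assms unfolding dag_positive_iff by auto
  define \<chi> where "\<chi> = tcomp C B E \<phi> (tdag B C g)"
  have "tcomp C B C g (tcomp C B B p (tdag B C g)) = tcomp C E C (tdag C E \<chi>) \<chi>"
    using \<phi> assms(2) by (simp add: \<chi>_def)
  moreover have "\<chi> \<in> Hom C E"
    using \<phi> assms(2) by (simp add: \<chi>_def)
  ultimately show ?thesis
    using dag_positive_tcomp_tdag by simp
qed

lemma dag_positive_dsum:
  assumes "dag_positive D B p" "dag_positive D E q"
  shows "dag_positive D (B \<oplus> E) (dsum D B E B E p q)"
proof -
  obtain C \<phi> C' \<psi> where \<phi>: "\<phi> \<in> Hom B C" "p = tcomp B C B (tdag B C \<phi>) \<phi>"
    and \<psi>: "\<psi> \<in> Hom E C'" "q = tcomp E C' E (tdag E C' \<psi>) \<psi>"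
    using assms unfolding dag_positive_iff by auto
  define \<chi> where "\<chi> = dsum D B E C C' \<phi> \<psi>"
  have "dsum D B E B E p q = tcomp (B \<oplus> E) (C \<oplus> C') (B \<oplus> E) (tdag (B \<oplus> E) (C \<oplus> C') \<chi>) \<chi>"
    using \<phi> \<psi> by (simp add: \<chi>_def)
  moreover have "\<chi> \<in> Hom (B \<oplus> E) (C \<oplus> C')"
    using \<phi> \<psi> by (simp add: \<chi>_def)
  ultimately show ?thesis
    using dag_positive_tcomp_tdag by simp
qed

section \<open>The Gauss construction is a Markov category\<close>

abbreviation \<GG> :: "'o \<Rightarrow> ('o, ('o, 'm) gmor) mcat" where "\<GG> X \<equiv> gauss D X"

abbreviation deterministic :: "'o \<Rightarrow> 'o \<Rightarrow> 'o \<Rightarrow> 'm \<Rightarrow> ('o, 'm) gmor" where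
  "deterministic X A B f \<equiv> (A, B, f, dZero D B B, dZero D X B)"

lemma gauss_Hom_iff:
  "(A', B', f, p, x) \<in> mHom (\<GG> X) A B \<longleftrightarrow>
    A' = A \<and> B' = B \<and> f \<in> Hom A B \<and> dag_positive D B p \<and> x \<in> Hom X B"
  by (simp add: gauss_def)

lemma gauss_HomE:
  assumes "F \<in> mHom (\<GG> X) A B"
  obtains f p x where "F = (A, B, f, p, x)" "f \<in> Hom A B" "dag_positive D B p" "x \<in> Hom X B"
  using assms by (cases F) (auto simp: gauss_def)

lemma deterministic_in_gauss_Hom [simp]: "f \<in> Hom A B \<Longrightarrow> deterministic X A B f \<in> mHom (\<GG> X) A B"
  by (simp add: gauss_Hom_iff)

lemma gauss_comp:
  "mCmp (\<GG> X) (B', C, g, q, y) (A, B, f, p, x) =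
    (A, C, tcomp A B C g f, tadd C C q (tcomp C B C g (tcomp C B B p (tdag B C g))),
     tadd X C y (tcomp X B C g x))"
  by (simp add: gauss_def tcomp_def tadd_def tdag_def)

lemma gauss_id: "mId (\<GG> X) A = deterministic X A A (dId D A)"
  by (simp add: gauss_def)

lemma gauss_tensor: "mTen (\<GG> X) A B = A \<oplus> B"
  by (simp add: gauss_def)

lemma gauss_tensor_map:
  "mTenM (\<GG> X) (A, B, f, p, x) (C, E, g, q, y) =
    (A \<oplus> C, B \<oplus> E, dsum D A C B E f g, dsum D B E B E p q,
     tadd X (B \<oplus> E) (tcomp X B (B \<oplus> E) (\<iota>\<^sub>1 B E) x) (tcomp X E (B \<oplus> E) (\<iota>\<^sub>2 B E) y))"
  by (simp add: gauss_def dpair_eq)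

lemma gauss_unit: "mUnit (\<GG> X) = dZob D"
  by (simp add: gauss_def)

lemma gauss_assoc: "mAssoc (\<GG> X) A B C = deterministic X ((A \<oplus> B) \<oplus> C) (A \<oplus> B \<oplus> C) (assoc_map A B C)"
  by (simp add: gauss_def assoc_map_def tadd_def tcomp_def)

lemma gauss_lu: "mLu (\<GG> X) A = deterministic X (dZob D \<oplus> A) A (\<pi>\<^sub>2 (dZob D) A)"
  by (simp add: gauss_def)

lemma gauss_ru: "mRu (\<GG> X) A = deterministic X (A \<oplus> dZob D) A (\<pi>\<^sub>1 A (dZob D))"
  by (simp add: gauss_def)

lemma gauss_sym: "mSym (\<GG> X) A B = deterministic X (A \<oplus> B) (B \<oplus> A) (swap_map A B)"
  by (simp add: gauss_def swap_map_def tadd_def tcomp_def)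

lemma gauss_copy: "mCopy (\<GG> X) A = deterministic X A (A \<oplus> A) (diag_map A)"
  by (simp add: gauss_def diag_map_def dpair_def tadd_def comp_id_right[OF i1_hom] comp_id_right[OF i2_hom])

lemma gauss_del: "mDel (\<GG> X) A = deterministic X A (dZob D) (dZero D A (dZob D))"
  by (simp add: gauss_def)

lemmas gauss_simps = gauss_comp gauss_id gauss_tensor gauss_tensor_map gauss_unit
  gauss_assoc gauss_lu gauss_ru gauss_sym gauss_copy gauss_del

lemma gauss_eqI: "hom_eq A B f f' \<Longrightarrow> p = p' \<Longrightarrow> x = x' \<Longrightarrow> (A, B, f, p, x) = (A, B, f', p', x')"
  by (simp add: hom_eq_def)

lemma gauss_eqI':
  "hom_eq A B f f' \<Longrightarrow> hom_eq B B p p' \<Longrightarrow> hom_eq X B x x' \<Longrightarrow> (A, B, f, p, x) = (A, B, f', p', x')"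
  by (simp add: hom_eq_def)

lemma gauss_comp_hom:
  "F \<in> mHom (\<GG> X) A B \<Longrightarrow> G \<in> mHom (\<GG> X) B C \<Longrightarrow> mCmp (\<GG> X) G F \<in> mHom (\<GG> X) A C"
  by (elim gauss_HomE) (simp add: gauss_comp gauss_Hom_iff dag_positive_tadd dag_positive_conj)

lemma gauss_id_hom: "mId (\<GG> X) A \<in> mHom (\<GG> X) A A"
  by (simp add: gauss_id)

lemma gauss_comp_id_left: "F \<in> mHom (\<GG> X) A B \<Longrightarrow> mCmp (\<GG> X) (mId (\<GG> X) B) F = F"
  by (erule gauss_HomE) (simp add: gauss_simps dag_positive_in_Hom)

lemma gauss_comp_id_right: "F \<in> mHom (\<GG> X) A B \<Longrightarrow> mCmp (\<GG> X) F (mId (\<GG> X) A) = F"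
  by (erule gauss_HomE) (simp add: gauss_simps dag_positive_in_Hom)

lemma gauss_comp_assoc:
  "F \<in> mHom (\<GG> X) A B \<Longrightarrow> G \<in> mHom (\<GG> X) B C \<Longrightarrow> K \<in> mHom (\<GG> X) C E \<Longrightarrow>
    mCmp (\<GG> X) K (mCmp (\<GG> X) G F) = mCmp (\<GG> X) (mCmp (\<GG> X) K G) F"
  by (elim gauss_HomE) (simp add: gauss_simps dag_positive_in_Hom tadd_ac)

lemma gauss_inverse:
  assumes f: "f \<in> Hom A B" and g: "g \<in> Hom B A"
    and "tcomp A B A g f = dId D A" "tcomp B A B f g = dId D B"
  shows "m_is_iso (\<GG> X) A B (deterministic X A B f)"
    and "m_inv (\<GG> X) A B (deterministic X A B f) = deterministic X B A g"
proof -
  let ?F = "deterministic X A B f" and ?G = "deterministic X B A g"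
  have F: "?F \<in> mHom (\<GG> X) A B" and G: "?G \<in> mHom (\<GG> X) B A"
    using f g by simp_all
  have GF: "mCmp (\<GG> X) ?G ?F = mId (\<GG> X) A" and FG: "mCmp (\<GG> X) ?F ?G = mId (\<GG> X) B"
    using assms by (simp_all add: gauss_comp gauss_id)
  show "m_is_iso (\<GG> X) A B ?F"
    unfolding m_is_iso_def using F G GF FG by blast
  show "m_inv (\<GG> X) A B ?F = ?G"
    unfolding m_inv_def
  proof (rule some_equality)
    fix G'
    assume G': "G' \<in> mHom (\<GG> X) B A \<and> mCmp (\<GG> X) G' ?F = mId (\<GG> X) A \<and> mCmp (\<GG> X) ?F G' = mId (\<GG> X) B"
    then have G'_hom: "G' \<in> mHom (\<GG> X) B A" by blast
    have "G' = mCmp (\<GG> X) G' (mCmp (\<GG> X) ?F ?G)"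
      using gauss_comp_id_right[OF G'_hom] FG by simp
    also have "\<dots> = mCmp (\<GG> X) (mCmp (\<GG> X) G' ?F) ?G"
      by (rule gauss_comp_assoc[OF G F G'_hom])
    also have "\<dots> = ?G"
      using gauss_comp_id_left[OF G] G' by simp
    finally show "G' = ?G" .
  qed (use G GF FG in blast)
qed

lemma assoc_map_inverse:
  "hom_eq ((A \<oplus> B) \<oplus> C) ((A \<oplus> B) \<oplus> C)
     (tcomp ((A \<oplus> B) \<oplus> C) (A \<oplus> B \<oplus> C) ((A \<oplus> B) \<oplus> C) (assoc_inv_map A B C) (assoc_map A B C))
     (dId D ((A \<oplus> B) \<oplus> C))"
  "hom_eq (A \<oplus> B \<oplus> C) (A \<oplus> B \<oplus> C)
     (tcomp (A \<oplus> B \<oplus> C) ((A \<oplus> B) \<oplus> C) (A \<oplus> B \<oplus> C) (assoc_map A B C) (assoc_inv_map A B C))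
     (dId D (A \<oplus> B \<oplus> C))"
  by (intro hom_eq_intros; simp add: hom_eq_def assoc_map_def assoc_inv_map_def)+

lemma lu_map_inverse:
  "hom_eq (dZob D \<oplus> A) (dZob D \<oplus> A)
     (tcomp (dZob D \<oplus> A) A (dZob D \<oplus> A) (\<iota>\<^sub>2 (dZob D) A) (\<pi>\<^sub>2 (dZob D) A)) (dId D (dZob D \<oplus> A))"
  by (intro hom_eq_intros; simp add: hom_eq_def)

lemma ru_map_inverse:
  "hom_eq (A \<oplus> dZob D) (A \<oplus> dZob D)
     (tcomp (A \<oplus> dZob D) A (A \<oplus> dZob D) (\<iota>\<^sub>1 A (dZob D)) (\<pi>\<^sub>1 A (dZob D))) (dId D (A \<oplus> dZob D))"
  by (intro hom_eq_intros; simp add: hom_eq_def)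

lemmas gauss_assoc_inverse =
  gauss_inverse[OF assoc_map_in_Hom assoc_inv_map_in_Hom assoc_map_inverse[THEN hom_eqD]]
lemmas gauss_lu_inverse = gauss_inverse[OF p2_hom i2_hom lu_map_inverse[THEN hom_eqD] tcomp_p2_i2]
lemmas gauss_ru_inverse = gauss_inverse[OF p1_hom i1_hom ru_map_inverse[THEN hom_eqD] tcomp_p1_i1]

lemma gauss_tens_hom:
  "F \<in> mHom (\<GG> X) A B \<Longrightarrow> G \<in> mHom (\<GG> X) C E \<Longrightarrow>
    mTenM (\<GG> X) F G \<in> mHom (\<GG> X) (mTen (\<GG> X) A C) (mTen (\<GG> X) B E)"
  by (elim gauss_HomE) (simp add: gauss_tensor_map gauss_tensor gauss_Hom_iff dag_positive_dsum del: dsum_eq)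

lemma gauss_sym_hom: "mSym (\<GG> X) A B \<in> mHom (\<GG> X) (mTen (\<GG> X) A B) (mTen (\<GG> X) B A)"
  by (simp add: gauss_sym gauss_tensor)

lemma gauss_copy_hom: "mCopy (\<GG> X) A \<in> mHom (\<GG> X) A (mTen (\<GG> X) A A)"
  by (simp add: gauss_copy gauss_tensor)

lemma gauss_del_hom: "mDel (\<GG> X) A \<in> mHom (\<GG> X) A (mUnit (\<GG> X))"
  by (simp add: gauss_del gauss_unit)

lemma gauss_assoc_iso:
  "m_is_iso (\<GG> X) (mTen (\<GG> X) (mTen (\<GG> X) A B) C) (mTen (\<GG> X) A (mTen (\<GG> X) B C)) (mAssoc (\<GG> X) A B C)"
  unfolding gauss_tensor gauss_assoc by (rule gauss_assoc_inverse(1))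

lemma gauss_lu_iso: "m_is_iso (\<GG> X) (mTen (\<GG> X) (mUnit (\<GG> X)) A) A (mLu (\<GG> X) A)"
  unfolding gauss_tensor gauss_unit gauss_lu by (rule gauss_lu_inverse(1))

lemma gauss_ru_iso: "m_is_iso (\<GG> X) (mTen (\<GG> X) A (mUnit (\<GG> X))) A (mRu (\<GG> X) A)"
  unfolding gauss_tensor gauss_unit gauss_ru by (rule gauss_ru_inverse(1))

lemma gauss_tens_id: "mTenM (\<GG> X) (mId (\<GG> X) A) (mId (\<GG> X) B) = mId (\<GG> X) (mTen (\<GG> X) A B)"
  by (simp only: gauss_simps, rule gauss_eqI, (intro hom_eq_intros)?, simp_all add: hom_eq_def)

lemma gauss_tens_comp:
  "F \<in> mHom (\<GG> X) A B \<Longrightarrow> F' \<in> mHom (\<GG> X) B C \<Longrightarrow> G \<in> mHom (\<GG> X) A' B' \<Longrightarrow> G' \<in> mHom (\<GG> X) B' C' \<Longrightarrow>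
    mTenM (\<GG> X) (mCmp (\<GG> X) F' F) (mCmp (\<GG> X) G' G) = mCmp (\<GG> X) (mTenM (\<GG> X) F' G') (mTenM (\<GG> X) F G)"
  by (elim gauss_HomE) (simp add: gauss_simps dag_positive_in_Hom tadd_ac)

lemma gauss_assoc_nat:
  "F \<in> mHom (\<GG> X) A A' \<Longrightarrow> G \<in> mHom (\<GG> X) B B' \<Longrightarrow> K \<in> mHom (\<GG> X) C C' \<Longrightarrow>
    mCmp (\<GG> X) (mAssoc (\<GG> X) A' B' C') (mTenM (\<GG> X) (mTenM (\<GG> X) F G) K)
      = mCmp (\<GG> X) (mTenM (\<GG> X) F (mTenM (\<GG> X) G K)) (mAssoc (\<GG> X) A B C)"
  apply (elim gauss_HomE)
  apply (simp only: gauss_simps)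
  apply (rule gauss_eqI'[where X = X]; (intro hom_eq_intros)?)
  apply (simp_all add: hom_eq_def assoc_map_def dag_positive_in_Hom tadd_ac)
  done

lemma gauss_lu_nat:
  "F \<in> mHom (\<GG> X) A B \<Longrightarrow> mCmp (\<GG> X) F (mLu (\<GG> X) A)
    = mCmp (\<GG> X) (mLu (\<GG> X) B) (mTenM (\<GG> X) (mId (\<GG> X) (mUnit (\<GG> X))) F)"
  apply (elim gauss_HomE)
  apply (simp only: gauss_simps)
  apply (rule gauss_eqI'[where X = X]; (intro hom_eq_intros)?)
  apply (simp_all add: hom_eq_def dag_positive_in_Hom tadd_ac)
  done

lemma gauss_ru_nat:
  "F \<in> mHom (\<GG> X) A B \<Longrightarrow> mCmp (\<GG> X) F (mRu (\<GG> X) A)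
    = mCmp (\<GG> X) (mRu (\<GG> X) B) (mTenM (\<GG> X) F (mId (\<GG> X) (mUnit (\<GG> X))))"
  apply (elim gauss_HomE)
  apply (simp only: gauss_simps)
  apply (rule gauss_eqI'[where X = X]; (intro hom_eq_intros)?)
  apply (simp_all add: hom_eq_def dag_positive_in_Hom tadd_ac)
  done

lemma gauss_sym_nat:
  "F \<in> mHom (\<GG> X) A A' \<Longrightarrow> G \<in> mHom (\<GG> X) B B' \<Longrightarrow>
    mCmp (\<GG> X) (mSym (\<GG> X) A' B') (mTenM (\<GG> X) F G) = mCmp (\<GG> X) (mTenM (\<GG> X) G F) (mSym (\<GG> X) A B)"
  apply (elim gauss_HomE)
  apply (simp only: gauss_simps)
  apply (rule gauss_eqI'[where X = X]; (intro hom_eq_intros)?)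
  apply (simp_all add: hom_eq_def swap_map_def dag_positive_in_Hom tadd_ac)
  done

lemma gauss_del_nat: "F \<in> mHom (\<GG> X) A B \<Longrightarrow> mCmp (\<GG> X) (mDel (\<GG> X) B) F = mDel (\<GG> X) A"
  apply (elim gauss_HomE)
  apply (simp only: gauss_simps)
  apply (rule gauss_eqI'[where X = X]; (intro hom_eq_intros)?)
  apply (simp_all add: hom_eq_def dag_positive_in_Hom)
  done

lemmas structure_map_defs = assoc_map_def assoc_inv_map_def swap_map_def diag_map_def

lemma gauss_pentagon:
  "mCmp (\<GG> X) (mAssoc (\<GG> X) A B (mTen (\<GG> X) C E)) (mAssoc (\<GG> X) (mTen (\<GG> X) A B) C E)
    = mCmp (\<GG> X) (mTenM (\<GG> X) (mId (\<GG> X) A) (mAssoc (\<GG> X) B C E))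
        (mCmp (\<GG> X) (mAssoc (\<GG> X) A (mTen (\<GG> X) B C) E) (mTenM (\<GG> X) (mAssoc (\<GG> X) A B C) (mId (\<GG> X) E)))"
  by (simp only: gauss_simps, rule gauss_eqI, (intro hom_eq_intros)?, simp_all add: hom_eq_def structure_map_defs)

lemma gauss_triangle:
  "mCmp (\<GG> X) (mTenM (\<GG> X) (mId (\<GG> X) A) (mLu (\<GG> X) B)) (mAssoc (\<GG> X) A (mUnit (\<GG> X)) B)
    = mTenM (\<GG> X) (mRu (\<GG> X) A) (mId (\<GG> X) B)"
  by (simp only: gauss_simps, rule gauss_eqI, (intro hom_eq_intros)?, simp_all add: hom_eq_def structure_map_defs)

lemma gauss_sym_sym: "mCmp (\<GG> X) (mSym (\<GG> X) B A) (mSym (\<GG> X) A B) = mId (\<GG> X) (mTen (\<GG> X) A B)"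
  by (simp only: gauss_simps, rule gauss_eqI, (intro hom_eq_intros)?, simp_all add: hom_eq_def structure_map_defs)

lemma gauss_hexagon:
  "mCmp (\<GG> X) (mAssoc (\<GG> X) B C A) (mCmp (\<GG> X) (mSym (\<GG> X) A (mTen (\<GG> X) B C)) (mAssoc (\<GG> X) A B C))
    = mCmp (\<GG> X) (mTenM (\<GG> X) (mId (\<GG> X) B) (mSym (\<GG> X) A C))
        (mCmp (\<GG> X) (mAssoc (\<GG> X) B A C) (mTenM (\<GG> X) (mSym (\<GG> X) A B) (mId (\<GG> X) C)))"
  by (simp only: gauss_simps, rule gauss_eqI, (intro hom_eq_intros)?, simp_all add: hom_eq_def structure_map_defs)

lemma gauss_counit_left:
  "mCmp (\<GG> X) (mLu (\<GG> X) A) (mCmp (\<GG> X) (mTenM (\<GG> X) (mDel (\<GG> X) A) (mId (\<GG> X) A)) (mCopy (\<GG> X) A))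
    = mId (\<GG> X) A"
  by (simp only: gauss_simps, rule gauss_eqI, (intro hom_eq_intros)?, simp_all add: hom_eq_def structure_map_defs)

lemma gauss_counit_right:
  "mCmp (\<GG> X) (mRu (\<GG> X) A) (mCmp (\<GG> X) (mTenM (\<GG> X) (mId (\<GG> X) A) (mDel (\<GG> X) A)) (mCopy (\<GG> X) A))
    = mId (\<GG> X) A"
  by (simp only: gauss_simps, rule gauss_eqI, (intro hom_eq_intros)?, simp_all add: hom_eq_def structure_map_defs)

lemma gauss_coassoc:
  "mCmp (\<GG> X) (mAssoc (\<GG> X) A A A) (mCmp (\<GG> X) (mTenM (\<GG> X) (mCopy (\<GG> X) A) (mId (\<GG> X) A)) (mCopy (\<GG> X) A))
    = mCmp (\<GG> X) (mTenM (\<GG> X) (mId (\<GG> X) A) (mCopy (\<GG> X) A)) (mCopy (\<GG> X) A)"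
  by (simp only: gauss_simps, rule gauss_eqI, (intro hom_eq_intros)?, simp_all add: hom_eq_def structure_map_defs)

lemma gauss_cocomm: "mCmp (\<GG> X) (mSym (\<GG> X) A A) (mCopy (\<GG> X) A) = mCopy (\<GG> X) A"
  by (simp only: gauss_simps, rule gauss_eqI, (intro hom_eq_intros)?, simp_all add: hom_eq_def structure_map_defs)

lemma gauss_copy_tensor:
  "mCopy (\<GG> X) (mTen (\<GG> X) A B) = mCmp (\<GG> X) (m_mid (\<GG> X) A B) (mTenM (\<GG> X) (mCopy (\<GG> X) A) (mCopy (\<GG> X) B))"
  unfolding m_mid_def
  by (simp only: gauss_tensor gauss_assoc gauss_assoc_inverse(2),
      simp only: gauss_simps, rule gauss_eqI, (intro hom_eq_intros)?, simp_all add: hom_eq_def structure_map_defs)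

lemma gauss_del_tensor:
  "mDel (\<GG> X) (mTen (\<GG> X) A B) = mCmp (\<GG> X) (mLu (\<GG> X) (mUnit (\<GG> X))) (mTenM (\<GG> X) (mDel (\<GG> X) A) (mDel (\<GG> X) B))"
  by (simp only: gauss_simps, rule gauss_eqI, (intro hom_eq_intros)?, simp_all add: hom_eq_def)

lemma gauss_copy_unit:
  "mCopy (\<GG> X) (mUnit (\<GG> X)) = m_inv (\<GG> X) (mTen (\<GG> X) (mUnit (\<GG> X)) (mUnit (\<GG> X))) (mUnit (\<GG> X)) (mLu (\<GG> X) (mUnit (\<GG> X)))"
  by (simp only: gauss_tensor gauss_unit gauss_lu gauss_lu_inverse(2),
      simp only: gauss_simps, rule gauss_eqI, (intro hom_eq_intros)?, simp_all add: hom_eq_def structure_map_defs)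

lemma gauss_del_unit: "mDel (\<GG> X) (mUnit (\<GG> X)) = mId (\<GG> X) (mUnit (\<GG> X))"
  by (simp only: gauss_simps, rule gauss_eqI, (intro hom_eq_intros)?, simp_all add: hom_eq_def)

lemmas gauss_markov_axioms = gauss_comp_hom gauss_id_hom gauss_comp_id_left gauss_comp_id_right
  gauss_comp_assoc gauss_tens_hom gauss_tens_id gauss_tens_comp gauss_assoc_iso gauss_assoc_nat
  gauss_lu_iso gauss_lu_nat gauss_ru_iso gauss_ru_nat gauss_pentagon gauss_triangle
  gauss_sym_hom gauss_sym_nat gauss_sym_sym gauss_hexagon gauss_copy_hom gauss_del_hom
  gauss_counit_left gauss_counit_right gauss_coassoc gauss_cocomm gauss_copy_tensor gauss_del_tensor
  gauss_copy_unit gauss_del_unit gauss_del_nat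

theorem markov_category_gauss: "markov_category (\<GG> X)"
  by unfold_locales (fact gauss_markov_axioms)+

end

section \<open>Conditionals\<close>

definition is_conditional :: "('o, 'n) mcat \<Rightarrow> 'o \<Rightarrow> 'o \<Rightarrow> 'o \<Rightarrow> 'n \<Rightarrow> 'n \<Rightarrow> bool" where
  "is_conditional M A B C F G \<longleftrightarrow> G \<in> mHom M (mTen M B A) C \<and>
     mCmp M (mTenM M (mId M B) G)
      (mCmp M (mAssoc M B B A)
      (mCmp M (mTenM M (mCopy M B) (mId M A))
      (mCmp M (mTenM M (mCmp M (mRu M B) (mTenM M (mId M B) (mDel M C))) (mId M A))
      (mCmp M (mTenM M F (mId M A)) (mCopy M A))))) = F"

lemma has_conditionals_iff:
  "has_conditionals M \<longleftrightarrow>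
    (\<forall>A B C F. F \<in> mHom M A (mTen M B C) \<longrightarrow> (\<exists>G. is_conditional M A B C F G))"
  by (simp add: has_conditionals_def is_conditional_def Bex_def)

context dagger_additive_category
begin

text \<open>
  The identities are stated after composition with an arbitrary \<open>R\<close>, the form in which
  they occur in right-nested composites.
\<close>

lemma mp13_inverse_identities:
  assumes u: "u \<in> Hom B Y" and h: "mp13_inverse D B Y u h"
  shows "h \<in> Hom Y B"
    and "tcomp B B Y u (tcomp B Y B h u) = u"
    and "R \<in> Hom Z B \<Longrightarrow> tcomp Z B Y u (tcomp Z Y B h (tcomp Z B Y u R)) = tcomp Z B Y u R"
    and "R \<in> Hom Z Y \<Longrightarrow>
      tcomp Z B Y (tdag Y B h) (tcomp Z Y B (tdag B Y u) R) = tcomp Z B Y u (tcomp Z Y B h R)"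
    and "R \<in> Hom Z Y \<Longrightarrow>
      tcomp Z Y B (tdag B Y u) (tcomp Z B Y u (tcomp Z Y B h R)) = tcomp Z Y B (tdag B Y u) R"
proof -
  show hH: "h \<in> Hom Y B"
    using h by (simp add: mp13_inverse_def)
  show uhu: "tcomp B B Y u (tcomp B Y B h u) = u"
    using h by (simp add: mp13_inverse_def tcomp_def)
  have uh_selfadjoint: "tcomp Y B Y (tdag Y B h) (tdag B Y u) = tcomp Y B Y u h"
  proof -
    have "tdag Y Y (tcomp Y B Y u h) = tcomp Y B Y u h"
      using h by (simp add: mp13_inverse_def tcomp_def tdag_def)
    then show ?thesis
      using u hH by simp
  qed
  show "tcomp Z B Y u (tcomp Z Y B h (tcomp Z B Y u R)) = tcomp Z B Y u R" if R: "R \<in> Hom Z B" for Z R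
  proof -
    have "tcomp Z B Y u R = tcomp Z B Y (tcomp B B Y u (tcomp B Y B h u)) R"
      by (simp only: uhu)
    then show ?thesis
      using R u hH by simp
  qed
  show uh_selfadjoint_R:
    "tcomp Z B Y (tdag Y B h) (tcomp Z Y B (tdag B Y u) R) = tcomp Z B Y u (tcomp Z Y B h R)"
    if R: "R \<in> Hom Z Y" for Z R
  proof -
    have "tcomp Z Y Y (tcomp Y B Y (tdag Y B h) (tdag B Y u)) R = tcomp Z Y Y (tcomp Y B Y u h) R"
      by (simp only: uh_selfadjoint)
    then show ?thesis
      using R u hH by simp
  qed
  have udag_uh: "tcomp Y Y B (tdag B Y u) (tcomp Y B Y u h) = tdag B Y u"
  proof -
    have "tdag B Y u = tdag B Y (tcomp B B Y u (tcomp B Y B h u))"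
      by (simp only: uhu)
    also have "\<dots> = tcomp Y Y B (tdag B Y u) (tcomp Y B Y u h)"
      using u hH by (simp add: uh_selfadjoint_R uh_selfadjoint)
    finally show ?thesis by (rule sym)
  qed
  show "tcomp Z Y B (tdag B Y u) (tcomp Z B Y u (tcomp Z Y B h R)) = tcomp Z Y B (tdag B Y u) R"
    if R: "R \<in> Hom Z Y" for Z R
  proof -
    have "tcomp Z Y B (tdag B Y u) R = tcomp Z Y B (tcomp Y Y B (tdag B Y u) (tcomp Y B Y u h)) R"
      by (simp only: udag_uh)
    then show ?thesis
      using R u hH by simp
  qed
qed

lemma schur_complement_identity:
  assumes u: "u \<in> Hom C Y" and v: "v \<in> Hom C Y"
    and "tcomp C Y C (tdag C Y v) v = tcomp C Y C (tdag C Y u) v"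
    and "tcomp C Y C (tdag C Y v) u = tcomp C Y C (tdag C Y u) v"
  shows "tadd C C (tcomp C Y C (tdag C Y (tadd C Y u (tneg C Y v))) (tadd C Y u (tneg C Y v)))
      (tcomp C Y C (tdag C Y u) v) = tcomp C Y C (tdag C Y u) u"
  using assms by (simp add: tadd_assoc)

lemma gaussian_regression:
  assumes \<phi>: "\<phi> \<in> Hom (B \<oplus> C) Y"
    and p: "p = tcomp (B \<oplus> C) Y (B \<oplus> C) (tdag (B \<oplus> C) Y \<phi>) \<phi>"
    and h: "mp13_inverse D B Y (tcomp B (B \<oplus> C) Y \<phi> (\<iota>\<^sub>1 B C)) h"
  obtains g q where "g \<in> Hom B C" and "dag_positive D C q"
    and "tcomp B B C g (tcomp B (B \<oplus> C) B (\<pi>\<^sub>1 B C) (tcomp B (B \<oplus> C) (B \<oplus> C) p (\<iota>\<^sub>1 B C)))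
      = tcomp B (B \<oplus> C) C (\<pi>\<^sub>2 B C) (tcomp B (B \<oplus> C) (B \<oplus> C) p (\<iota>\<^sub>1 B C))"
    and "tcomp C (B \<oplus> C) B (\<pi>\<^sub>1 B C) (tcomp C (B \<oplus> C) (B \<oplus> C) p (tcomp C B (B \<oplus> C) (\<iota>\<^sub>1 B C) (tdag B C g)))
      = tcomp C (B \<oplus> C) B (\<pi>\<^sub>1 B C) (tcomp C (B \<oplus> C) (B \<oplus> C) p (\<iota>\<^sub>2 B C))"
    and "tadd C C q (tcomp C B C g (tcomp C (B \<oplus> C) B (\<pi>\<^sub>1 B C) (tcomp C (B \<oplus> C) (B \<oplus> C) p (\<iota>\<^sub>2 B C))))
      = tcomp C (B \<oplus> C) C (\<pi>\<^sub>2 B C) (tcomp C (B \<oplus> C) (B \<oplus> C) p (\<iota>\<^sub>2 B C))"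
proof -
  define \<phi>\<^sub>1 where "\<phi>\<^sub>1 = tcomp B (B \<oplus> C) Y \<phi> (\<iota>\<^sub>1 B C)"
  define \<phi>\<^sub>2 where "\<phi>\<^sub>2 = tcomp C (B \<oplus> C) Y \<phi> (\<iota>\<^sub>2 B C)"
  have \<phi>\<^sub>1_Hom: "\<phi>\<^sub>1 \<in> Hom B Y" and \<phi>\<^sub>2_Hom: "\<phi>\<^sub>2 \<in> Hom C Y"
    using \<phi> by (simp_all add: \<phi>\<^sub>1_def \<phi>\<^sub>2_def)
  note mp13 = mp13_inverse_identities[OF \<phi>\<^sub>1_Hom h[folded \<phi>\<^sub>1_def]]
  note hH = mp13(1)
  have p11: "tcomp Z (B \<oplus> C) B (\<pi>\<^sub>1 B C) (tcomp Z (B \<oplus> C) (B \<oplus> C) p (tcomp Z B (B \<oplus> C) (\<iota>\<^sub>1 B C) R))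
      = tcomp Z Y B (tdag B Y \<phi>\<^sub>1) (tcomp Z B Y \<phi>\<^sub>1 R)" if "R \<in> Hom Z B" for Z R
    using that \<phi> by (simp add: p \<phi>\<^sub>1_def)
  have p11': "tcomp B (B \<oplus> C) B (\<pi>\<^sub>1 B C) (tcomp B (B \<oplus> C) (B \<oplus> C) p (\<iota>\<^sub>1 B C)) = tcomp B Y B (tdag B Y \<phi>\<^sub>1) \<phi>\<^sub>1"
    using p11[of "dId D B" B] \<phi>\<^sub>1_Hom by simp
  have p12: "tcomp C (B \<oplus> C) B (\<pi>\<^sub>1 B C) (tcomp C (B \<oplus> C) (B \<oplus> C) p (\<iota>\<^sub>2 B C)) = tcomp C Y B (tdag B Y \<phi>\<^sub>1) \<phi>\<^sub>2"
    using \<phi> by (simp add: p \<phi>\<^sub>1_def \<phi>\<^sub>2_def)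
  have p21: "tcomp B (B \<oplus> C) C (\<pi>\<^sub>2 B C) (tcomp B (B \<oplus> C) (B \<oplus> C) p (\<iota>\<^sub>1 B C)) = tcomp B Y C (tdag C Y \<phi>\<^sub>2) \<phi>\<^sub>1"
    using \<phi> by (simp add: p \<phi>\<^sub>1_def \<phi>\<^sub>2_def)
  have p22: "tcomp C (B \<oplus> C) C (\<pi>\<^sub>2 B C) (tcomp C (B \<oplus> C) (B \<oplus> C) p (\<iota>\<^sub>2 B C)) = tcomp C Y C (tdag C Y \<phi>\<^sub>2) \<phi>\<^sub>2"
    using \<phi> by (simp add: p \<phi>\<^sub>2_def)
  define g where "g = tcomp B Y C (tdag C Y \<phi>\<^sub>2) (tdag Y B h)"
  define K where "K = tcomp C B Y \<phi>\<^sub>1 (tcomp C Y B h \<phi>\<^sub>2)"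
  define \<psi> where "\<psi> = tadd C Y \<phi>\<^sub>2 (tneg C Y K)"
  have g: "g \<in> Hom B C" and K: "K \<in> Hom C Y"
    using \<phi>\<^sub>1_Hom \<phi>\<^sub>2_Hom hH by (simp_all add: g_def K_def)
  have "tcomp B B C g (tcomp B (B \<oplus> C) B (\<pi>\<^sub>1 B C) (tcomp B (B \<oplus> C) (B \<oplus> C) p (\<iota>\<^sub>1 B C)))
      = tcomp B (B \<oplus> C) C (\<pi>\<^sub>2 B C) (tcomp B (B \<oplus> C) (B \<oplus> C) p (\<iota>\<^sub>1 B C))"
    unfolding p11' p21 g_def using \<phi>\<^sub>1_Hom \<phi>\<^sub>2_Hom hH by (simp add: mp13(2,4))
  moreover have "tcomp C (B \<oplus> C) B (\<pi>\<^sub>1 B C) (tcomp C (B \<oplus> C) (B \<oplus> C) p (tcomp C B (B \<oplus> C) (\<iota>\<^sub>1 B C) (tdag B C g)))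
      = tcomp C (B \<oplus> C) B (\<pi>\<^sub>1 B C) (tcomp C (B \<oplus> C) (B \<oplus> C) p (\<iota>\<^sub>2 B C))"
    unfolding p12 g_def using \<phi>\<^sub>1_Hom \<phi>\<^sub>2_Hom hH by (simp add: p11 mp13(5))
  moreover have "tadd C C (tcomp C Y C (tdag C Y \<psi>) \<psi>)
      (tcomp C B C g (tcomp C (B \<oplus> C) B (\<pi>\<^sub>1 B C) (tcomp C (B \<oplus> C) (B \<oplus> C) p (\<iota>\<^sub>2 B C))))
      = tcomp C (B \<oplus> C) C (\<pi>\<^sub>2 B C) (tcomp C (B \<oplus> C) (B \<oplus> C) p (\<iota>\<^sub>2 B C))"
  proof -
    have "tcomp C B C g (tcomp C (B \<oplus> C) B (\<pi>\<^sub>1 B C) (tcomp C (B \<oplus> C) (B \<oplus> C) p (\<iota>\<^sub>2 B C)))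
        = tcomp C Y C (tdag C Y \<phi>\<^sub>2) K"
      unfolding p12 g_def K_def using \<phi>\<^sub>1_Hom \<phi>\<^sub>2_Hom hH by (simp add: mp13(4))
    moreover have "tcomp C Y C (tdag C Y K) K = tcomp C Y C (tdag C Y \<phi>\<^sub>2) K"
      unfolding K_def using \<phi>\<^sub>1_Hom \<phi>\<^sub>2_Hom hH by (simp add: mp13(3,4,5))
    moreover have "tcomp C Y C (tdag C Y K) \<phi>\<^sub>2 = tcomp C Y C (tdag C Y \<phi>\<^sub>2) K"
      unfolding K_def using \<phi>\<^sub>1_Hom \<phi>\<^sub>2_Hom hH by (simp add: mp13(4))
    ultimately show ?thesis
      unfolding p22 \<psi>_def using schur_complement_identity[OF \<phi>\<^sub>2_Hom K] by simp
  qed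
  moreover have "\<psi> \<in> Hom C Y"
    using \<phi>\<^sub>2_Hom K by (simp add: \<psi>_def)
  ultimately show ?thesis
    using that[OF g dag_positive_tcomp_tdag] by blast
qed

lemma gauss_is_conditional:
  assumes f: "f \<in> Hom A (B \<oplus> C)" and p: "p \<in> Hom (B \<oplus> C) (B \<oplus> C)" and x: "x \<in> Hom X (B \<oplus> C)"
    and g: "g \<in> Hom B C" and q: "dag_positive D C q"
    and "tcomp B B C g (tcomp B (B \<oplus> C) B (\<pi>\<^sub>1 B C) (tcomp B (B \<oplus> C) (B \<oplus> C) p (\<iota>\<^sub>1 B C)))
      = tcomp B (B \<oplus> C) C (\<pi>\<^sub>2 B C) (tcomp B (B \<oplus> C) (B \<oplus> C) p (\<iota>\<^sub>1 B C))"
    and "tcomp C (B \<oplus> C) B (\<pi>\<^sub>1 B C) (tcomp C (B \<oplus> C) (B \<oplus> C) p (tcomp C B (B \<oplus> C) (\<iota>\<^sub>1 B C) (tdag B C g)))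
      = tcomp C (B \<oplus> C) B (\<pi>\<^sub>1 B C) (tcomp C (B \<oplus> C) (B \<oplus> C) p (\<iota>\<^sub>2 B C))"
    and "tadd C C q (tcomp C B C g (tcomp C (B \<oplus> C) B (\<pi>\<^sub>1 B C) (tcomp C (B \<oplus> C) (B \<oplus> C) p (\<iota>\<^sub>2 B C))))
      = tcomp C (B \<oplus> C) C (\<pi>\<^sub>2 B C) (tcomp C (B \<oplus> C) (B \<oplus> C) p (\<iota>\<^sub>2 B C))"
  defines "f\<^sub>A \<equiv> tadd A C (tcomp A (B \<oplus> C) C (\<pi>\<^sub>2 B C) f) (tneg A C (tcomp A B C g (tcomp A (B \<oplus> C) B (\<pi>\<^sub>1 B C) f)))"
    and "y \<equiv> tadd X C (tcomp X (B \<oplus> C) C (\<pi>\<^sub>2 B C) x) (tneg X C (tcomp X B C g (tcomp X (B \<oplus> C) B (\<pi>\<^sub>1 B C) x)))"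
  shows "is_conditional (\<GG> X) A B C (A, B \<oplus> C, f, p, x)
    (B \<oplus> A, C, tadd (B \<oplus> A) C (tcomp (B \<oplus> A) B C g (\<pi>\<^sub>1 B A)) (tcomp (B \<oplus> A) A C f\<^sub>A (\<pi>\<^sub>2 B A)), q, y)"
proof -
  have f\<^sub>A: "f\<^sub>A \<in> Hom A C" and y: "y \<in> Hom X C"
    using f g x by (simp_all add: f\<^sub>A_def y_def)
  have "tadd A C f\<^sub>A (tcomp A B C g (tcomp A (B \<oplus> C) B (\<pi>\<^sub>1 B C) f)) = tcomp A (B \<oplus> C) C (\<pi>\<^sub>2 B C) f"
    unfolding f\<^sub>A_def using f g by (simp add: tadd_assoc)
  moreover have "tadd X C y (tcomp X B C g (tcomp X (B \<oplus> C) B (\<pi>\<^sub>1 B C) x)) = tcomp X (B \<oplus> C) C (\<pi>\<^sub>2 B C) x"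
    unfolding y_def using x g by (simp add: tadd_assoc)
  ultimately show ?thesis
    using assms(1-8) f\<^sub>A y dag_positive_in_Hom[OF q]
    unfolding is_conditional_def
    apply (simp only: gauss_simps gauss_Hom_iff)
    apply (intro conjI gauss_eqI'[where X = X]; (intro hom_eq_intros)?)
    apply (simp_all add: hom_eq_def assoc_map_def diag_map_def tadd_ac)
    done
qed

theorem has_conditionals_gauss:
  assumes mp13: "\<forall>A B f. f \<in> dHom D A B \<longrightarrow> (\<exists>g. mp13_inverse D A B f g)"
  shows "has_conditionals (\<GG> X)"
  unfolding has_conditionals_iff
proof (intro allI impI)
  fix A B C F
  assume "F \<in> mHom (\<GG> X) A (mTen (\<GG> X) B C)"
  then obtain f p x where F: "F = (A, B \<oplus> C, f, p, x)" and f: "f \<in> Hom A (B \<oplus> C)"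
    and p: "dag_positive D (B \<oplus> C) p" and x: "x \<in> Hom X (B \<oplus> C)"
    unfolding gauss_tensor by (elim gauss_HomE)
  obtain Y \<phi> where \<phi>: "\<phi> \<in> Hom (B \<oplus> C) Y" and p_eq: "p = tcomp (B \<oplus> C) Y (B \<oplus> C) (tdag (B \<oplus> C) Y \<phi>) \<phi>"
    using p unfolding dag_positive_iff by blast
  obtain h where "mp13_inverse D B Y (tcomp B (B \<oplus> C) Y \<phi> (\<iota>\<^sub>1 B C)) h"
    using mp13 \<phi> by (meson structure_maps_in_Hom tcomp_in_Hom)
  then obtain g q where "g \<in> Hom B C" "dag_positive D C q"
    and "tcomp B B C g (tcomp B (B \<oplus> C) B (\<pi>\<^sub>1 B C) (tcomp B (B \<oplus> C) (B \<oplus> C) p (\<iota>\<^sub>1 B C)))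
      = tcomp B (B \<oplus> C) C (\<pi>\<^sub>2 B C) (tcomp B (B \<oplus> C) (B \<oplus> C) p (\<iota>\<^sub>1 B C))"
    and "tcomp C (B \<oplus> C) B (\<pi>\<^sub>1 B C) (tcomp C (B \<oplus> C) (B \<oplus> C) p (tcomp C B (B \<oplus> C) (\<iota>\<^sub>1 B C) (tdag B C g)))
      = tcomp C (B \<oplus> C) B (\<pi>\<^sub>1 B C) (tcomp C (B \<oplus> C) (B \<oplus> C) p (\<iota>\<^sub>2 B C))"
    and "tadd C C q (tcomp C B C g (tcomp C (B \<oplus> C) B (\<pi>\<^sub>1 B C) (tcomp C (B \<oplus> C) (B \<oplus> C) p (\<iota>\<^sub>2 B C))))
      = tcomp C (B \<oplus> C) C (\<pi>\<^sub>2 B C) (tcomp C (B \<oplus> C) (B \<oplus> C) p (\<iota>\<^sub>2 B C))"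
    using gaussian_regression[OF \<phi> p_eq] by blast
  then show "\<exists>G. is_conditional (\<GG> X) A B C F G"
    unfolding F using gauss_is_conditional[OF f dag_positive_in_Hom[OF p] x] by blast
qed

end

theorem mainTheorem13:
  fixes D :: "('o,'m) dac" and X :: 'o
  assumes "dagger_additive_category D"
    and "\<forall>A B f. f \<in> dHom D A B \<longrightarrow> (\<exists>g. mp13_inverse D A B f g)"
  shows "markov_category (gauss D X) \<and> has_conditionals (gauss D X)"
  using dagger_additive_category.markov_category_gauss[OF assms(1)]
    dagger_additive_category.has_conditionals_gauss[OF assms]
  by blast

end
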